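(* Let $p$ be an obstacle and $(p_n)$ an approximating sequence as in the context. Let ${\boldsymbol v}\in C([0,T];{\boldsymbol W}_\sigma(\Omega))$ satisfy $|{\boldsymbol v}|\le p$ on $Q$ and $\operatorname{supp}({\boldsymbol v})\subset\{(x,t)\in\Omega\times[0,T]: p(x,t)\ge\delta\}$ for some $\delta>0$. Put $M=\delta+\sup_{(x,t)\in Q}|{\boldsymbol v}(x,t)|$ and $$\delta_n=\frac1\delta\max_{\operatorname{supp}({\boldsymbol v})}|\min\{p,M\}-\min\{p_n,M\}|,\quad n\in\mathbb N.$$ Then $\delta_n\to0$ as $n\to\infty$, and for every $n$, $(1-\delta_n)^+{\boldsymbol v}(t)\in K(p_n;t)$ for all $t\in[0,T]$.
   Context: $\Omega\subset\mathbb R^3$ is a bounded domain with smooth boundary, $0<T<\infty$, $Q=\Omega\times(0,T)$, $\overline Q$ its closure. ${\boldsymbol W}_\sigma(\Omega)$, ${\boldsymbol V}_\sigma(\Omega)$ are the closures of the smooth compactly supported divergence-free fields $\Omega\to\mathbb R^3$ in $W^{1,4}_0(\Omega)^3$ and $H^1_0(\Omega)^3$. $\operatorname{supp}$ denotes the closure of the set where a function is nonzero. Obstacle: $p:\overline Q\to[0,\infty]$ continuous as a map into the extended half-line $[0,\infty]$ (equivalently $p/(1+p)$, set to $1$ where $p=\infty$, is continuous). Approximating sequence: $p_n:\overline Q\to(0,\infty)$ Lipschitz, such that (a) for every $\kappa\in(0,\infty)$, $p_n\to p$ uniformly on $\{(x,t)\in\overline Q: p(x,t)\le\kappa\}$;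 (b) for every sufficiently large $M>0$ there is $n_M$ with $M\le p_n\le p$ on $\{(x,t)\in\overline Q:p(x,t)>M\}$ for all $n\ge n_M$. $K(p_n;t)=\{{\boldsymbol z}\in{\boldsymbol V}_\sigma(\Omega): |{\boldsymbol z}(x)|\le p_n(x,t)\text{ a.e.}\}$. $a^+=\max\{a,0\}$. *)

theory Defs
  imports "HOL-Analysis.Analysis"
begin

type_synonym R3 = "real ^ 3"

definition pd :: "3 \<Rightarrow> (R3 \<Rightarrow> real) \<Rightarrow> (R3 \<Rightarrow> real)" where
  "pd i f x = frechet_derivative f (at x) (axis i 1)"

definition C_infty :: "(R3 \<Rightarrow> real) \<Rightarrow> bool" where
  "C_infty f \<longleftrightarrow> (\<forall>is :: 3 list. \<forall>x. foldr pd is f differentiable (at x))"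

definition supp :: "('a::topological_space \<Rightarrow> 'b::zero) \<Rightarrow> 'a set" where
  "supp f = closure {x. f x \<noteq> 0}"

definition smooth_bounded_domain :: "R3 set \<Rightarrow> bool" where
  "smooth_bounded_domain \<Omega> \<longleftrightarrow> open \<Omega> \<and> connected \<Omega> \<and> \<Omega> \<noteq> {} \<and> bounded \<Omega> \<and>
     (\<exists>\<phi>. C_infty \<phi> \<and> \<Omega> = {x. \<phi> x < 0} \<and> (\<forall>x. \<phi> x = 0 \<longrightarrow> (\<exists>i. pd i \<phi> x \<noteq> 0)))"

definition test_fun :: "R3 set \<Rightarrow> (R3 \<Rightarrow> real) \<Rightarrow> bool" where
  "test_fun \<Omega> \<psi> \<longleftrightarrow> C_infty \<psi> \<and> compact (supp \<psi>) \<and> supp \<psi> \<subseteq> \<Omega>"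

definition grad :: "(R3 \<Rightarrow> R3) \<Rightarrow> R3 \<Rightarrow> real^3^3" where
  "grad u x = (\<chi> i j. pd j (\<lambda>y. u y $ i) x)"

definition test_div_free :: "R3 set \<Rightarrow> (R3 \<Rightarrow> R3) \<Rightarrow> bool" where
  "test_div_free \<Omega> \<phi> \<longleftrightarrow> (\<forall>i. C_infty (\<lambda>x. \<phi> x $ i)) \<and> compact (supp \<phi>) \<and> supp \<phi> \<subseteq> \<Omega> \<and>
     (\<forall>x. (\<Sum>i\<in>UNIV. pd i (\<lambda>y. \<phi> y $ i) x) = 0)"

text \<open>Closure of the divergence-free test fields in W^{1,q}_0(Omega)^3 (as a set of functions,
  i.e. representatives): f is the W^{1,q}-limit of such test fields, G being the limit of the gradients.\<close>
definition sob_closure :: "real \<Rightarrow> R3 set \<Rightarrow> (R3 \<Rightarrow> R3) set" where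
  "sob_closure q \<Omega> = {f. f \<in> borel_measurable (lebesgue_on \<Omega>) \<and>
     (\<exists>\<phi> G. (\<forall>k. test_div_free \<Omega> (\<phi> k)) \<and> G \<in> borel_measurable (lebesgue_on \<Omega>) \<and>
        (\<lambda>k. \<integral>\<^sup>+x. ennreal (norm (\<phi> k x - f x) powr q) \<partial>lebesgue_on \<Omega>) \<longlonglongrightarrow> 0 \<and>
        (\<lambda>k. \<integral>\<^sup>+x. ennreal (norm (grad (\<phi> k) x - G x) powr q) \<partial>lebesgue_on \<Omega>) \<longlonglongrightarrow> 0)}"

definition W_sigma :: "R3 set \<Rightarrow> (R3 \<Rightarrow> R3) set" where
  "W_sigma \<Omega> = sob_closure 4 \<Omega>"

definition V_sigma :: "R3 set \<Rightarrow> (R3 \<Rightarrow> R3) set" where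
  "V_sigma \<Omega> = sob_closure 2 \<Omega>"

definition weak_grad :: "R3 set \<Rightarrow> (R3 \<Rightarrow> R3) \<Rightarrow> (R3 \<Rightarrow> real^3^3) \<Rightarrow> bool" where
  "weak_grad \<Omega> f G \<longleftrightarrow> G \<in> borel_measurable (lebesgue_on \<Omega>) \<and>
     (\<forall>\<psi>. test_fun \<Omega> \<psi> \<longrightarrow> (\<forall>i j.
        integral\<^sup>L (lebesgue_on \<Omega>) (\<lambda>x. f x $ i * pd j \<psi> x)
        = - integral\<^sup>L (lebesgue_on \<Omega>) (\<lambda>x. G x $ i $ j * \<psi> x)))"

text \<open>v in C([0,T]; W_sigma(Omega)), v given as a function of (x,t).\<close>
definition C_W_sigma :: "R3 set \<Rightarrow> real \<Rightarrow> (R3 \<times> real \<Rightarrow> R3) \<Rightarrow> bool" where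
  "C_W_sigma \<Omega> T v \<longleftrightarrow> (\<forall>t\<in>{0..T}. (\<lambda>x. v (x, t)) \<in> W_sigma \<Omega>) \<and>
     (\<exists>Dv. (\<forall>t\<in>{0..T}. weak_grad \<Omega> (\<lambda>x. v (x, t)) (Dv t)) \<and>
        (\<forall>t0\<in>{0..T}. ((\<lambda>t. \<integral>\<^sup>+x. ennreal (norm (v (x, t) - v (x, t0)) powr 4)
                                   + ennreal (norm (Dv t x - Dv t0 x) powr 4) \<partial>lebesgue_on \<Omega>)
                       \<longlongrightarrow> 0) (at t0 within {0..T})))"

definition K :: "R3 set \<Rightarrow> (R3 \<times> real \<Rightarrow> real) \<Rightarrow> real \<Rightarrow> (R3 \<Rightarrow> R3) set" where
  "K \<Omega> q t = {z \<in> V_sigma \<Omega>. AE x in lebesgue_on \<Omega>. norm (z x) \<le> q (x, t)}"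

definition obstacle :: "R3 set \<Rightarrow> real \<Rightarrow> (R3 \<times> real \<Rightarrow> ennreal) \<Rightarrow> bool" where
  "obstacle \<Omega> T p \<longleftrightarrow> continuous_on (closure \<Omega> \<times> {0..T}) p"

definition approx_seq :: "R3 set \<Rightarrow> real \<Rightarrow> (R3 \<times> real \<Rightarrow> ennreal) \<Rightarrow> (nat \<Rightarrow> R3 \<times> real \<Rightarrow> real) \<Rightarrow> bool" where
  "approx_seq \<Omega> T p pn \<longleftrightarrow>
     (\<forall>n. (\<forall>z\<in>closure \<Omega> \<times> {0..T}. pn n z > 0) \<and> (\<exists>L. L-lipschitz_on (closure \<Omega> \<times> {0..T}) (pn n))) \<and>
     (\<forall>\<kappa>>0. \<forall>\<epsilon>>0. \<exists>N. \<forall>n\<ge>N. \<forall>z\<in>closure \<Omega> \<times> {0..T}.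
         p z \<le> ennreal \<kappa> \<longrightarrow> \<bar>pn n z - enn2real (p z)\<bar> < \<epsilon>) \<and>
     (\<exists>M0>0. \<forall>M\<ge>M0. \<exists>nM. \<forall>n\<ge>nM. \<forall>z\<in>closure \<Omega> \<times> {0..T}.
         p z > ennreal M \<longrightarrow> M \<le> pn n z \<and> ennreal (pn n z) \<le> p z)"

end

theory Submission
  imports Defs
begin

(*
  On the support S of v the obstacle is at least \<delta> and |v| \<le> p (assumed for 0 < t < T,
  this bound extends to 0 \<le> t \<le> T by continuity), so the truncation
  m = min {p, M} satisfies \<delta> \<le> m and |v| \<le> m on S. Since m - min {p\<^sub>n, M} \<le> \<delta> \<delta>\<^sub>n there,
  (1 - \<delta>\<^sub>n) |v| \<le> m - \<delta>\<^sub>n \<delta> \<le> min {p\<^sub>n, M} \<le> p\<^sub>n; scaling preserves the solenoidal Sobolev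
  classes and W\<^sub>\<sigma> \<subseteq> V\<^sub>\<sigma> on a bounded domain, which gives membership in K(p\<^sub>n; t).
  The convergence \<delta>\<^sub>n \<rightarrow> 0 is the uniform convergence of min {p\<^sub>n, M} to min {p, M}:
  where p \<le> M\<^sub>1 this is assumption (a), and where p > M\<^sub>1 \<ge> M both truncations equal M by (b).
*)

lemma pd_cmult:
  assumes "\<And>x. h differentiable at x"
  shows "pd i (\<lambda>x. c * h x) = (\<lambda>x. c * pd i h x)"
proof
  fix x
  have "((\<lambda>x. c * h x) has_derivative (\<lambda>y. c * frechet_derivative h (at x) y)) (at x)"
    using assms frechet_derivative_works has_derivative_mult_right by blast
  then show "pd i (\<lambda>x. c * h x) x = c * pd i h x"
    by (simp add: pd_def frechet_derivative_at[symmetric])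
qed

lemma foldr_pd_cmult:
  assumes "C_infty h"
  shows "foldr pd is (\<lambda>x. c * h x) = (\<lambda>x. c * foldr pd is h x)"
proof (induction "is")
  case (Cons i js)
  have "\<And>x. foldr pd js h differentiable at x"
    using assms unfolding C_infty_def by blast
  then show ?case using Cons by (simp add: pd_cmult)
qed simp

lemma C_infty_cmult: "C_infty h \<Longrightarrow> C_infty (\<lambda>x. c * h x)"
  unfolding C_infty_def
  by (simp add: foldr_pd_cmult[unfolded C_infty_def] differentiable_mult)

lemma C_infty_continuous_pd: "C_infty h \<Longrightarrow> continuous_on UNIV (foldr pd is h)"
  unfolding C_infty_def
  by (simp add: continuous_at_imp_continuous_on differentiable_imp_continuous_within)

lemma supp_scaleR_subset:
  fixes f :: "'a::topological_space \<Rightarrow> 'b::real_vector"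
  shows "supp (\<lambda>x. c *\<^sub>R f x) \<subseteq> supp f"
  unfolding supp_def by (intro closure_mono) auto

lemma test_div_free_scaleR:
  assumes "test_div_free \<Omega> \<phi>"
  shows "test_div_free \<Omega> (\<lambda>x. c *\<^sub>R \<phi> x)"
proof -
  have C: "\<And>i. C_infty (\<lambda>x. \<phi> x $ i)" and div: "\<And>x. (\<Sum>i\<in>UNIV. pd i (\<lambda>y. \<phi> y $ i) x) = 0"
    using assms unfolding test_div_free_def by blast+
  have "compact (supp (\<lambda>x. c *\<^sub>R \<phi> x))"
    using assms supp_scaleR_subset[of c \<phi>] unfolding test_div_free_def
    by (metis closed_closure compact_Int_closed inf.absorb_iff2 supp_def)
  moreover have "supp (\<lambda>x. c *\<^sub>R \<phi> x) \<subseteq> \<Omega>"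
    using assms supp_scaleR_subset[of c \<phi>] unfolding test_div_free_def by blast
  moreover have "(\<Sum>i\<in>UNIV. pd i (\<lambda>y. (c *\<^sub>R \<phi> y) $ i) x) = 0" for x
    using foldr_pd_cmult[OF C, of "[_]" c] div[of x] by (simp add: sum_distrib_left[symmetric])
  ultimately show ?thesis
    unfolding test_div_free_def using C C_infty_cmult by simp
qed

lemma grad_scaleR:
  assumes "test_div_free \<Omega> \<phi>"
  shows "grad (\<lambda>x. c *\<^sub>R \<phi> x) x = c *\<^sub>R grad \<phi> x"
  using assms foldr_pd_cmult[of "\<lambda>x. \<phi> x $ _" "[_]" c]
  unfolding grad_def test_div_free_def by (simp add: vec_eq_iff)

lemma test_div_free_measurable:
  assumes "test_div_free \<Omega> \<phi>" "\<Omega> \<in> sets lebesgue"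
  shows "\<phi> \<in> borel_measurable (lebesgue_on \<Omega>)" "grad \<phi> \<in> borel_measurable (lebesgue_on \<Omega>)"
proof -
  have C: "\<And>i. C_infty (\<lambda>x. \<phi> x $ i)"
    using assms(1) unfolding test_div_free_def by blast
  have "continuous_on UNIV (\<lambda>x. \<chi> i. \<phi> x $ i)"
    using C_infty_continuous_pd[OF C, of "[]"] by (intro continuous_on_vec_lambda) simp
  moreover have "continuous_on UNIV (grad \<phi>)"
    unfolding grad_def using C_infty_continuous_pd[OF C, of "[_]"]
    by (intro continuous_on_vec_lambda) simp
  ultimately show "\<phi> \<in> borel_measurable (lebesgue_on \<Omega>)" "grad \<phi> \<in> borel_measurable (lebesgue_on \<Omega>)"
    using assms(2) by (auto intro!: continuous_imp_measurable_on_sets_lebesgue intro: continuous_on_subset)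
qed

section \<open>Sobolev closures for different exponents\<close>

lemma powr_le_add_powr:
  fixes a \<eta> p r :: real
  assumes "0 \<le> a" "0 < \<eta>" "0 < p" "p \<le> r"
  shows "a powr p \<le> \<eta> + \<eta> powr (1 - r / p) * a powr r"
proof (cases "a powr p \<le> \<eta>")
  case True
  then show ?thesis by (simp add: add_increasing2)
next
  case False
  have "a powr r = a powr p * (a powr p) powr (r / p - 1)"
    using assms by (simp add: powr_powr powr_add[symmetric] algebra_simps)
  also have "\<dots> \<ge> a powr p * \<eta> powr (r / p - 1)"
    using False assms by (intro mult_left_mono powr_mono2) auto
  finally have "\<eta> powr (1 - r / p) * a powr r \<ge> \<eta> powr (1 - r / p) * \<eta> powr (r / p - 1) * a powr p"
    by (metis mult.assoc mult.commute mult_left_mono powr_ge_zero)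
  also have "\<eta> powr (1 - r / p) * \<eta> powr (r / p - 1) = 1"
    using assms by (simp add: powr_add[symmetric])
  finally show ?thesis using assms by simp
qed

lemma nn_integral_powr_tendsto_0_lower_exponent:
  fixes h :: "nat \<Rightarrow> 'a \<Rightarrow> real"
  assumes meas: "\<And>k. h k \<in> borel_measurable M" and fin: "emeasure M (space M) < \<infinity>"
    and nonneg: "\<And>k x. 0 \<le> h k x" and exps: "0 < p" "p \<le> r"
    and lim: "(\<lambda>k. \<integral>\<^sup>+x. ennreal (h k x powr r) \<partial>M) \<longlonglongrightarrow> 0"
  shows "(\<lambda>k. \<integral>\<^sup>+x. ennreal (h k x powr p) \<partial>M) \<longlonglongrightarrow> 0"
proof (rule tendsto_zero_ennreal)
  fix \<epsilon> :: real assume \<epsilon>: "0 < \<epsilon>"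
  define m where "m = enn2real (emeasure M (space M))"
  have m: "emeasure M (space M) = ennreal m" "0 \<le> m"
    using fin by (simp_all add: m_def)
  define \<eta> where "\<eta> = \<epsilon> / (2 * (m + 1))"
  define C where "C = \<eta> powr (1 - r / p)"
  have \<eta>: "0 < \<eta>" "\<eta> * m < \<epsilon> / 2"
    using \<epsilon> m by (simp_all add: \<eta>_def divide_simps)
  have C: "0 < C" using \<eta> by (simp add: C_def)
  have "eventually (\<lambda>k. (\<integral>\<^sup>+x. ennreal (h k x powr r) \<partial>M) < ennreal (\<epsilon> / (2 * C))) sequentially"
    using lim \<epsilon> C by (intro order_tendstoD(2)) auto
  then show "eventually (\<lambda>k. (\<integral>\<^sup>+x. ennreal (h k x powr p) \<partial>M) < ennreal \<epsilon>) sequentially"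
  proof eventually_elim
    fix k assume small: "(\<integral>\<^sup>+x. ennreal (h k x powr r) \<partial>M) < ennreal (\<epsilon> / (2 * C))"
    have [measurable]: "h k \<in> borel_measurable M" by (rule meas)
    have "(\<integral>\<^sup>+x. ennreal (h k x powr p) \<partial>M) \<le> (\<integral>\<^sup>+x. ennreal \<eta> + ennreal C * ennreal (h k x powr r) \<partial>M)"
    proof (intro nn_integral_mono)
      fix x
      have "ennreal (h k x powr p) \<le> ennreal (\<eta> + C * h k x powr r)"
        using powr_le_add_powr[OF nonneg \<eta>(1) exps] by (simp add: C_def ennreal_leI)
      then show "ennreal (h k x powr p) \<le> ennreal \<eta> + ennreal C * ennreal (h k x powr r)"
        using \<eta> C by (simp add: ennreal_plus ennreal_mult)
    qed
    also have "\<dots> = ennreal (\<eta> * m) + ennreal C * (\<integral>\<^sup>+x. ennreal (h k x powr r) \<partial>M)"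
      using \<eta> m by (subst nn_integral_add) (auto simp: nn_integral_cmult ennreal_mult)
    also have "\<dots> < ennreal (\<eta> * m) + ennreal C * ennreal (\<epsilon> / (2 * C))"
      unfolding ennreal_add_left_cancel_less using small C
      by (auto intro: ennreal_mult_strict_left_mono)
    also have "ennreal C * ennreal (\<epsilon> / (2 * C)) = ennreal (\<epsilon> / 2)"
      using C \<epsilon> by (simp flip: ennreal_mult)
    also have "ennreal (\<eta> * m) + ennreal (\<epsilon> / 2) = ennreal (\<eta> * m + \<epsilon> / 2)"
      using \<eta> m \<epsilon> by (simp add: ennreal_plus)
    also have "\<dots> < ennreal \<epsilon>"
      using \<eta> \<epsilon> by (simp add: ennreal_lessI)
    finally show "(\<integral>\<^sup>+x. ennreal (h k x powr p) \<partial>M) < ennreal \<epsilon>" .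
  qed
qed

lemma tendsto_nn_integral_norm_scaleR_powr:
  fixes u :: "nat \<Rightarrow> 'a \<Rightarrow> 'b::real_normed_vector"
  assumes "\<And>k. u k \<in> borel_measurable M"
    and "(\<lambda>k. \<integral>\<^sup>+x. ennreal (norm (u k x) powr q) \<partial>M) \<longlonglongrightarrow> 0"
  shows "(\<lambda>k. \<integral>\<^sup>+x. ennreal (norm (c *\<^sub>R u k x) powr q) \<partial>M) \<longlonglongrightarrow> 0"
proof -
  have "(\<integral>\<^sup>+x. ennreal (norm (c *\<^sub>R u k x) powr q) \<partial>M)
      = ennreal (\<bar>c\<bar> powr q) * (\<integral>\<^sup>+x. ennreal (norm (u k x) powr q) \<partial>M)" for k
    using assms(1) by (simp add: powr_mult ennreal_mult nn_integral_cmult[symmetric])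
  then show ?thesis
    using ennreal_tendsto_cmult[OF _ assms(2), of "ennreal (\<bar>c\<bar> powr q)"] by simp
qed

lemma sob_closure_scaleR:
  assumes f: "f \<in> sob_closure q \<Omega>" and \<Omega>: "\<Omega> \<in> sets lebesgue"
  shows "(\<lambda>x. c *\<^sub>R f x) \<in> sob_closure q \<Omega>"
proof -
  obtain \<phi> G where \<phi>: "\<And>k. test_div_free \<Omega> (\<phi> k)" and G: "G \<in> borel_measurable (lebesgue_on \<Omega>)"
    and lim_f: "(\<lambda>k. \<integral>\<^sup>+x. ennreal (norm (\<phi> k x - f x) powr q) \<partial>lebesgue_on \<Omega>) \<longlonglongrightarrow> 0"
    and lim_G: "(\<lambda>k. \<integral>\<^sup>+x. ennreal (norm (grad (\<phi> k) x - G x) powr q) \<partial>lebesgue_on \<Omega>) \<longlonglongrightarrow> 0"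
    and f_meas: "f \<in> borel_measurable (lebesgue_on \<Omega>)"
    using f unfolding sob_closure_def by blast
  note [measurable] = test_div_free_measurable[OF \<phi> \<Omega>] G f_meas
  have "(\<lambda>k. \<integral>\<^sup>+x. ennreal (norm (c *\<^sub>R \<phi> k x - c *\<^sub>R f x) powr q) \<partial>lebesgue_on \<Omega>) \<longlonglongrightarrow> 0"
    using tendsto_nn_integral_norm_scaleR_powr[OF _ lim_f, of c] by (simp add: scaleR_diff_right)
  moreover have "(\<lambda>k. \<integral>\<^sup>+x. ennreal (norm (grad (\<lambda>x. c *\<^sub>R \<phi> k x) x - c *\<^sub>R G x) powr q)
      \<partial>lebesgue_on \<Omega>) \<longlonglongrightarrow> 0"
    using tendsto_nn_integral_norm_scaleR_powr[OF _ lim_G, of c]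
    by (simp add: grad_scaleR[OF \<phi>] scaleR_diff_right)
  ultimately show ?thesis
    unfolding sob_closure_def using test_div_free_scaleR[OF \<phi>]
    by (intro CollectI conjI exI[of _ "\<lambda>k x. c *\<^sub>R \<phi> k x"] exI[of _ "\<lambda>x. c *\<^sub>R G x"]) auto
qed

lemma sob_closure_antimono:
  assumes f: "f \<in> sob_closure r \<Omega>" and \<Omega>: "\<Omega> \<in> sets lebesgue" "emeasure lebesgue \<Omega> < \<infinity>"
    and exps: "0 < p" "p \<le> r"
  shows "f \<in> sob_closure p \<Omega>"
proof -
  obtain \<phi> G where \<phi>: "\<And>k. test_div_free \<Omega> (\<phi> k)" and G: "G \<in> borel_measurable (lebesgue_on \<Omega>)"
    and lim_f: "(\<lambda>k. \<integral>\<^sup>+x. ennreal (norm (\<phi> k x - f x) powr r) \<partial>lebesgue_on \<Omega>) \<longlonglongrightarrow> 0"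
    and lim_G: "(\<lambda>k. \<integral>\<^sup>+x. ennreal (norm (grad (\<phi> k) x - G x) powr r) \<partial>lebesgue_on \<Omega>) \<longlonglongrightarrow> 0"
    and f_meas: "f \<in> borel_measurable (lebesgue_on \<Omega>)"
    using f unfolding sob_closure_def by blast
  note [measurable] = test_div_free_measurable[OF \<phi> \<Omega>(1)] G f_meas
  have fin: "emeasure (lebesgue_on \<Omega>) (space (lebesgue_on \<Omega>)) < \<infinity>"
    using \<Omega> by (simp add: emeasure_restrict_space)
  have "(\<lambda>k. \<integral>\<^sup>+x. ennreal (norm (\<phi> k x - f x) powr p) \<partial>lebesgue_on \<Omega>) \<longlonglongrightarrow> 0"
    by (rule nn_integral_powr_tendsto_0_lower_exponent[OF _ fin _ exps lim_f]) auto
  moreover have "(\<lambda>k. \<integral>\<^sup>+x. ennreal (norm (grad (\<phi> k) x - G x) powr p) \<partial>lebesgue_on \<Omega>) \<longlonglongrightarrow> 0"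
    by (rule nn_integral_powr_tendsto_0_lower_exponent[OF _ fin _ exps lim_G]) auto
  ultimately show ?thesis
    unfolding sob_closure_def using \<phi> G f_meas by blast
qed

lemma W_sigma_subset_V_sigma:
  assumes "\<Omega> \<in> sets lebesgue" "emeasure lebesgue \<Omega> < \<infinity>"
  shows "W_sigma \<Omega> \<subseteq> V_sigma \<Omega>"
  using sob_closure_antimono[OF _ assms, of _ 4 2] unfolding W_sigma_def V_sigma_def by force

lemma continuous_on_le_closure:
  fixes f g :: "'a::topological_space \<Rightarrow> 'b::linorder_topology"
  assumes f: "continuous_on S f" and g: "continuous_on S g"
    and A: "A \<subseteq> S" "\<And>y. y \<in> A \<Longrightarrow> f y \<le> g y" and x: "x \<in> S" "x \<in> closure A"
  shows "f x \<le> g x"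
proof (cases "x \<in> A")
  case False
  then have "at x within A \<noteq> bot"
    using x(2) by (simp add: closure_def trivial_limit_within)
  moreover have "(f \<longlongrightarrow> f x) (at x within A)" "(g \<longlongrightarrow> g x) (at x within A)"
    using f g x(1) A(1) by (auto simp: continuous_on_def intro: tendsto_within_subset)
  ultimately show ?thesis
    using A(2) by (intro tendsto_le[of "at x within A" g _ f]) (auto simp: eventually_at_filter)
qed (use A in simp)

lemma le_on_closed_time_interval:
  fixes f g :: "'a::topological_space \<times> real \<Rightarrow> 'b::linorder_topology"
  assumes "continuous_on (\<Omega> \<times> {0..T}) f" "continuous_on (\<Omega> \<times> {0..T}) g" "0 < T"
    and "\<And>z. z \<in> \<Omega> \<times> {0<..<T} \<Longrightarrow> f z \<le> g z" and "z \<in> \<Omega> \<times> {0..T}"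
  shows "f z \<le> g z"
proof (rule continuous_on_le_closure[OF assms(1,2) _ assms(4,5)])
  show "\<Omega> \<times> {0<..<T} \<subseteq> \<Omega> \<times> {0..T}" by auto
  show "z \<in> closure (\<Omega> \<times> {0<..<T})"
    using assms(3,5) closure_subset[of \<Omega>] by (auto simp: closure_Times)
qed

lemma bounded_image_of_compact_supp:
  fixes f :: "'a::topological_space \<Rightarrow> 'b::real_normed_vector" and D :: "'a set"
  defines "S \<equiv> supp (\<lambda>z. if z \<in> D then f z else 0)"
  assumes "continuous_on D f" "compact S" "S \<subseteq> D"
  shows "bounded (f ` D)"
proof -
  have "f ` D \<subseteq> insert 0 (f ` S)"
    using closure_subset by (force simp: S_def supp_def)
  moreover have "compact (f ` S)"
    using assms by (intro compact_continuous_image) (auto intro: continuous_on_subset)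
  ultimately show ?thesis
    by (meson bounded_insert bounded_subset compact_imp_bounded)
qed

lemma bounds_on_closed_time_interval:
  fixes v :: "'a::topological_space \<times> real \<Rightarrow> 'b::real_normed_vector"
  assumes T: "0 < T" and p: "continuous_on (closure \<Omega> \<times> {0..T}) p"
    and v: "continuous_on (\<Omega> \<times> {0..T}) v" and bdd: "bounded (v ` (\<Omega> \<times> {0..T}))"
    and vle: "\<forall>z\<in>\<Omega> \<times> {0<..<T}. ennreal (norm (v z)) \<le> p z" and z: "z \<in> \<Omega> \<times> {0..T}"
  shows "norm (v z) \<le> (SUP z\<in>\<Omega> \<times> {0<..<T}. norm (v z))" and "ennreal (norm (v z)) \<le> p z"
proof -
  have "bounded ((\<lambda>z. norm (v z)) ` (\<Omega> \<times> {0<..<T}))"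
    unfolding bounded_norm_comp by (rule bounded_subset[OF bdd]) auto
  then have "bdd_above ((\<lambda>z. norm (v z)) ` (\<Omega> \<times> {0<..<T}))"
    by (rule bounded_imp_bdd_above)
  then show "norm (v z) \<le> (SUP z\<in>\<Omega> \<times> {0<..<T}. norm (v z))"
    by (intro le_on_closed_time_interval[OF continuous_on_norm[OF v] continuous_on_const T _ z]
        cSUP_upper)
  have "continuous_on (\<Omega> \<times> {0..T}) p"
    using closure_subset by (intro continuous_on_subset[OF p]) auto
  then show "ennreal (norm (v z)) \<le> p z"
    using vle
    by (intro le_on_closed_time_interval[OF continuous_on_ennreal[OF continuous_on_norm[OF v]] _ T _ z])
      blast+
qed

section \<open>Truncated obstacles\<close>

lemma enn2real_min_ennreal_le: "0 \<le> M \<Longrightarrow> enn2real (min p (ennreal M)) \<le> M"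
  by (intro enn2real_leI) auto

lemma le_enn2real_min_ennreal:
  assumes "ennreal x \<le> p" "x \<le> M"
  shows "x \<le> enn2real (min p (ennreal M))"
proof (cases "0 \<le> x")
  case True
  then have "ennreal x \<le> min p (ennreal M)" using assms by simp
  then show ?thesis
    using True enn2real_mono[of "ennreal x" "min p (ennreal M)"] by (simp add: min_less_iff_disj)
next
  case False
  then show ?thesis using enn2real_nonneg[of "min p (ennreal M)"] by linarith
qed

lemma enn2real_min_ennreal:
  assumes "0 \<le> M"
  shows "enn2real (min p (ennreal M)) = (if p = top then M else min (enn2real p) M)"
  using assms by (cases p) (auto simp: min_def top_unique)

lemma truncated_obstacle_dominates_on_supp:
  fixes \<Omega> :: "'a::heine_borel set" and T \<delta> :: real
    and v :: "'a \<times> real \<Rightarrow> 'b::real_normed_vector" and p :: "'a \<times> real \<Rightarrow> ennreal"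
  defines "M \<equiv> \<delta> + (SUP z\<in>\<Omega> \<times> {0<..<T}. norm (v z))"
    and "S \<equiv> supp (\<lambda>z. if z \<in> \<Omega> \<times> {0..T} then v z else 0)"
  assumes \<Omega>: "bounded \<Omega>" "\<Omega> \<noteq> {}" and T: "0 < T" and \<delta>: "0 < \<delta>"
    and p: "continuous_on (closure \<Omega> \<times> {0..T}) p" and v: "continuous_on (\<Omega> \<times> {0..T}) v"
    and vle: "\<forall>z\<in>\<Omega> \<times> {0<..<T}. ennreal (norm (v z)) \<le> p z"
    and S: "S \<subseteq> {z \<in> \<Omega> \<times> {0..T}. ennreal \<delta> \<le> p z}"
  shows "0 < M"
    and "z \<in> S \<Longrightarrow> \<delta> \<le> enn2real (min (p z) (ennreal M)) \<and> norm (v z) \<le> enn2real (min (p z) (ennreal M))"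
proof -
  have "bounded S"
    using bounded_subset[OF bounded_Times[OF \<Omega>(1) bounded_closed_interval]] S by blast
  moreover have "closed S"
    by (simp add: S_def supp_def)
  ultimately have "compact S"
    by (simp add: compact_eq_bounded_closed)
  then have "bounded (v ` (\<Omega> \<times> {0..T}))"
    using S v bounded_image_of_compact_supp unfolding S_def by blast
  note v_bounds = bounds_on_closed_time_interval[OF T p v this vle]
  have v_le_M: "norm (v z) \<le> M - \<delta>" if "z \<in> \<Omega> \<times> {0..T}" for z
    using v_bounds(1)[OF that] by (simp add: M_def)
  obtain x0 where "(x0, 0) \<in> \<Omega> \<times> {0..T}"
    using \<Omega>(2) T by fastforce
  from v_le_M[OF this] show "0 < M"
    using \<delta> norm_ge_zero[of "v (x0, 0)"] by linarith
  assume "z \<in> S"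
  then have z: "z \<in> \<Omega> \<times> {0..T}" "ennreal \<delta> \<le> p z" using S by blast+
  moreover have "\<delta> \<le> M" "norm (v z) \<le> M"
    using v_le_M[OF z(1)] norm_ge_zero[of "v z"] \<delta> by linarith+
  ultimately show "\<delta> \<le> enn2real (min (p z) (ennreal M)) \<and> norm (v z) \<le> enn2real (min (p z) (ennreal M))"
    using v_bounds(2)[OF z(1)] by (auto intro!: le_enn2real_min_ennreal)
qed

lemma approx_seq_truncation_uniform:
  assumes apx: "approx_seq \<Omega> T p pn" and M: "0 < M" and \<epsilon>: "0 < \<epsilon>"
  shows "\<exists>N. \<forall>n\<ge>N. \<forall>z\<in>closure \<Omega> \<times> {0..T}.
           \<bar>enn2real (min (p z) (ennreal M)) - min (pn n z) M\<bar> < \<epsilon>"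
proof -
  obtain M0 where "0 < M0" and large: "\<And>M'. M0 \<le> M' \<Longrightarrow> \<exists>nM. \<forall>n\<ge>nM. \<forall>z\<in>closure \<Omega> \<times> {0..T}.
      ennreal M' < p z \<longrightarrow> M' \<le> pn n z \<and> ennreal (pn n z) \<le> p z"
    using apx unfolding approx_seq_def by blast
  define M1 where "M1 = max M M0"
  have M1: "M \<le> M1" "0 < M1" "M0 \<le> M1" using M by (auto simp: M1_def)
  obtain N1 where N1: "\<forall>n\<ge>N1. \<forall>z\<in>closure \<Omega> \<times> {0..T}. ennreal M1 < p z \<longrightarrow> M1 \<le> pn n z"
    using large[OF M1(3)] by blast
  obtain N2 where N2: "\<forall>n\<ge>N2. \<forall>z\<in>closure \<Omega> \<times> {0..T}.
      p z \<le> ennreal M1 \<longrightarrow> \<bar>pn n z - enn2real (p z)\<bar> < \<epsilon>"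
    using apx M1 \<epsilon> unfolding approx_seq_def by blast
  have "\<bar>enn2real (min (p z) (ennreal M)) - min (pn n z) M\<bar> < \<epsilon>"
    if n: "max N1 N2 \<le> n" and z: "z \<in> closure \<Omega> \<times> {0..T}" for n z
  proof (cases "p z \<le> ennreal M1")
    case True
    then have "p z \<noteq> top" "\<bar>pn n z - enn2real (p z)\<bar> < \<epsilon>"
      using N2 n z by (auto simp: top_unique)
    moreover have "\<bar>min (enn2real (p z)) M - min (pn n z) M\<bar> \<le> \<bar>pn n z - enn2real (p z)\<bar>"
      by (auto simp: min_def abs_if)
    ultimately show ?thesis using M by (simp add: enn2real_min_ennreal)
  next
    case False
    then have "M1 \<le> pn n z" using N1 n z by auto
    moreover have "p z = top \<or> M1 < enn2real (p z)"
      using False M1 by (cases "p z") auto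
    ultimately show ?thesis
      using M M1 \<epsilon> by (auto simp: enn2real_min_ennreal)
  qed
  then show ?thesis by blast
qed

lemma tendsto_cSUP_zero_uniform:
  fixes f :: "nat \<Rightarrow> 'a \<Rightarrow> real"
  assumes "S \<noteq> {}" and nonneg: "\<And>n z. z \<in> S \<Longrightarrow> 0 \<le> f n z"
    and unif: "\<And>\<epsilon>. 0 < \<epsilon> \<Longrightarrow> \<exists>N. \<forall>n\<ge>N. \<forall>z\<in>S. f n z < \<epsilon>"
  shows "(\<lambda>n. SUP z\<in>S. f n z) \<longlonglongrightarrow> 0"
proof (rule LIMSEQ_I)
  fix r :: real assume "0 < r"
  then obtain N where N: "\<forall>n\<ge>N. \<forall>z\<in>S. f n z < r / 2"
    using unif[of "r / 2"] by auto
  have "\<bar>SUP z\<in>S. f n z\<bar> < r" if "N \<le> n" for n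
  proof -
    have le: "\<And>z. z \<in> S \<Longrightarrow> f n z \<le> r / 2"
      using N that less_imp_le by blast
    obtain z where "z \<in> S" using assms(1) by blast
    moreover have "bdd_above (f n ` S)" using le by (intro bdd_aboveI2)
    ultimately have "0 \<le> (SUP z\<in>S. f n z)"
      using nonneg cSUP_upper order_trans by metis
    moreover have "(SUP z\<in>S. f n z) \<le> r / 2"
      using le by (intro cSUP_least[OF assms(1)])
    ultimately show ?thesis using \<open>0 < r\<close> by linarith
  qed
  then show "\<exists>N. \<forall>n\<ge>N. norm ((SUP z\<in>S. f n z) - 0) < r" by auto
qed

lemma truncation_gap_tendsto_0:
  assumes "approx_seq \<Omega> T p pn" "0 < M" "S \<subseteq> closure \<Omega> \<times> {0..T}"
  shows "(\<lambda>n. if S = {} then 0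
           else c * (SUP z\<in>S. \<bar>enn2real (min (p z) (ennreal M)) - min (pn n z) M\<bar>)) \<longlonglongrightarrow> 0"
proof (cases "S = {}")
  case False
  have "(\<lambda>n. SUP z\<in>S. \<bar>enn2real (min (p z) (ennreal M)) - min (pn n z) M\<bar>) \<longlonglongrightarrow> 0"
  proof (rule tendsto_cSUP_zero_uniform[OF False])
    fix \<epsilon> :: real assume "0 < \<epsilon>"
    then show "\<exists>N. \<forall>n\<ge>N. \<forall>z\<in>S. \<bar>enn2real (min (p z) (ennreal M)) - min (pn n z) M\<bar> < \<epsilon>"
      using approx_seq_truncation_uniform[OF assms(1,2)] assms(3) by (meson subsetD)
  qed simp
  then show ?thesis
    using False tendsto_mult_right_zero by auto
qed simp

lemma normalized_SUP_bounds:
  fixes f :: "'a \<Rightarrow> real" and S :: "'a set" and \<delta> B :: real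
  defines "d \<equiv> if S = {} then 0 else (1 / \<delta>) * (SUP y\<in>S. f y)"
  assumes "0 < \<delta>" and "\<And>y. y \<in> S \<Longrightarrow> 0 \<le> f y \<and> f y \<le> B"
  shows "0 \<le> d" and "z \<in> S \<Longrightarrow> f z \<le> \<delta> * d"
proof -
  have up: "f z \<le> (SUP y\<in>S. f y)" if "z \<in> S" for z
    using assms(3) that by (intro cSUP_upper bdd_aboveI2) auto
  show "0 \<le> d"
  proof (cases "S = {}")
    case False
    then obtain z where "z \<in> S" by blast
    then have "0 \<le> (SUP y\<in>S. f y)" using up assms(3) order_trans by blast
    then show ?thesis using False assms(2) by (simp add: d_def)
  qed (simp add: d_def)
  show "f z \<le> \<delta> * d" if "z \<in> S"
    using up[OF that] that assms(2) by (auto simp: d_def)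
qed

lemma scaled_le_of_truncation_gap:
  fixes a m q d \<delta> :: real
  assumes "0 \<le> a" "a \<le> m" "\<delta> \<le> m" "m - q \<le> \<delta> * d" "0 \<le> d" "0 \<le> q"
  shows "max (1 - d) 0 * a \<le> q"
proof (cases "d \<le> 1")
  case True
  have "(1 - d) * a \<le> (1 - d) * m" using True assms by (intro mult_left_mono) auto
  also have "\<dots> \<le> m - d * \<delta>" using assms mult_left_mono[of \<delta> m d] by (simp add: algebra_simps)
  finally show ?thesis using True assms by (simp add: mult.commute)
qed (use assms in simp)

lemma scaleR_in_K_of_truncation_gap:
  fixes f :: "R3 \<Rightarrow> R3" and m :: "R3 \<Rightarrow> real" and q :: "R3 \<times> real \<Rightarrow> real"
  assumes f: "f \<in> W_sigma \<Omega>" and \<Omega>: "\<Omega> \<in> sets lebesgue" "emeasure lebesgue \<Omega> < \<infinity>"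
    and "0 \<le> d" and q: "\<And>x. x \<in> \<Omega> \<Longrightarrow> 0 \<le> q (x, t)"
    and gap: "\<And>x. x \<in> \<Omega> \<Longrightarrow> f x \<noteq> 0 \<Longrightarrow> norm (f x) \<le> m x \<and> \<delta> \<le> m x \<and> m x - q (x, t) \<le> \<delta> * d"
  shows "(\<lambda>x. max (1 - d) 0 *\<^sub>R f x) \<in> K \<Omega> q t"
proof -
  have "(\<lambda>x. max (1 - d) 0 *\<^sub>R f x) \<in> V_sigma \<Omega>"
    using W_sigma_subset_V_sigma[OF \<Omega>] sob_closure_scaleR[OF _ \<Omega>(1)] f
    unfolding W_sigma_def V_sigma_def by blast
  moreover have "norm (max (1 - d) 0 *\<^sub>R f x) \<le> q (x, t)" if "x \<in> \<Omega>" for x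
    using scaled_le_of_truncation_gap[of "norm (f x)" "m x" \<delta> "q (x, t)" d] gap[OF that] q[OF that] \<open>0 \<le> d\<close>
    by (cases "f x = 0") auto
  ultimately show ?thesis
    unfolding K_def using \<Omega>(1) by (auto intro!: AE_I2)
qed

theorem lemma2p3:
  fixes \<Omega> :: "(real^3) set" and T \<delta> :: real
    and p :: "(real^3) \<times> real \<Rightarrow> ennreal"
    and pn :: "nat \<Rightarrow> (real^3) \<times> real \<Rightarrow> real"
    and v :: "(real^3) \<times> real \<Rightarrow> real^3"
  assumes dom: "smooth_bounded_domain \<Omega>"
    and T: "0 < T"
    and obs: "obstacle \<Omega> T p"
    and apx: "approx_seq \<Omega> T p pn"
    and vC: "C_W_sigma \<Omega> T v"
    and vcont: "continuous_on (\<Omega> \<times> {0..T}) v"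
    and vle: "\<forall>z\<in>\<Omega> \<times> {0<..<T}. ennreal (norm (v z)) \<le> p z"
    and dpos: "\<delta> > 0"
    and vsupp: "supp (\<lambda>z. if z \<in> \<Omega> \<times> {0..T} then v z else 0)
                  \<subseteq> {z \<in> \<Omega> \<times> {0..T}. p z \<ge> ennreal \<delta>}"
  shows "let M = \<delta> + (SUP z\<in>\<Omega> \<times> {0<..<T}. norm (v z));
             S = supp (\<lambda>z. if z \<in> \<Omega> \<times> {0..T} then v z else 0);
             \<delta>n = (\<lambda>n. if S = {} then 0 else
                    (1 / \<delta>) * (SUP z\<in>S. \<bar>enn2real (min (p z) (ennreal M)) - min (pn n z) M\<bar>))
         in \<delta>n \<longlonglongrightarrow> 0 \<and>
            (\<forall>n. \<forall>t\<in>{0..T}. (\<lambda>x. max (1 - \<delta>n n) 0 *\<^sub>R v (x, t)) \<in> K \<Omega> (pn n) t)"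
proof -
  define M where "M = \<delta> + (SUP z\<in>\<Omega> \<times> {0<..<T}. norm (v z))"
  define S where "S = supp (\<lambda>z. if z \<in> \<Omega> \<times> {0..T} then v z else 0)"
  define m where "m = (\<lambda>z. enn2real (min (p z) (ennreal M)))"
  define \<delta>n where "\<delta>n = (\<lambda>n. if S = {} then 0 else (1 / \<delta>) * (SUP z\<in>S. \<bar>m z - min (pn n z) M\<bar>))"
  have \<Omega>: "open \<Omega>" "bounded \<Omega>" "\<Omega> \<noteq> {}"
    using dom unfolding smooth_bounded_domain_def by auto
  have \<Omega>_meas: "\<Omega> \<in> sets lebesgue" "emeasure lebesgue \<Omega> < \<infinity>"
    using lmeasurable_open[OF \<Omega>(2,1)] by (auto simp: fmeasurable_def)
  have cyl: "\<Omega> \<times> {0..T} \<subseteq> closure \<Omega> \<times> {0..T}"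
    using closure_subset by auto
  have S: "S \<subseteq> \<Omega> \<times> {0..T}"
    using vsupp by (auto simp: S_def)
  have pn_pos: "0 < pn n z" if "z \<in> \<Omega> \<times> {0..T}" for n z
    using apx cyl that unfolding approx_seq_def by blast
  note dominated = truncated_obstacle_dominates_on_supp[OF \<Omega>(2,3) T dpos
      obs[unfolded obstacle_def] vcont vle vsupp, folded M_def S_def]
  have "0 \<le> \<bar>m z - min (pn n z) M\<bar> \<and> \<bar>m z - min (pn n z) M\<bar> \<le> M" if "z \<in> S" for n z
  proof -
    have "0 < pn n z" "0 \<le> m z" "m z \<le> M"
      using pn_pos S that dominated(1) enn2real_min_ennreal_le[of M "p z"] by (auto simp: m_def)
    then show ?thesis by (auto simp: abs_le_iff min_def)
  qed
  then have gap: "0 \<le> \<delta>n n" "z \<in> S \<Longrightarrow> \<bar>m z - min (pn n z) M\<bar> \<le> \<delta> * \<delta>n n" for n z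
    using normalized_SUP_bounds[where f = "\<lambda>z. \<bar>m z - min (pn n z) M\<bar>" and B = M, OF dpos]
    unfolding \<delta>n_def by simp_all
  have "\<delta>n \<longlonglongrightarrow> 0"
    using truncation_gap_tendsto_0[OF apx dominated(1) order_trans[OF S cyl]] unfolding \<delta>n_def m_def .
  moreover have "(\<lambda>x. max (1 - \<delta>n n) 0 *\<^sub>R v (x, t)) \<in> K \<Omega> (pn n) t" if t: "t \<in> {0..T}" for n t
  proof (rule scaleR_in_K_of_truncation_gap[OF _ \<Omega>_meas gap(1)])
    show "(\<lambda>x. v (x, t)) \<in> W_sigma \<Omega>"
      using vC t by (simp add: C_W_sigma_def)
    show "0 \<le> pn n (x, t)" if "x \<in> \<Omega>" for x
      using pn_pos that t by (simp add: less_imp_le)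
    fix x assume "x \<in> \<Omega>" "v (x, t) \<noteq> 0"
    then have "(x, t) \<in> S"
      using t closure_subset by (force simp: S_def supp_def)
    then show "norm (v (x, t)) \<le> m (x, t) \<and> \<delta> \<le> m (x, t) \<and> m (x, t) - pn n (x, t) \<le> \<delta> * \<delta>n n"
      using dominated(2) gap(2)[of "(x, t)" n] by (auto simp: abs_le_iff m_def)
  qed
  ultimately have "\<delta>n \<longlonglongrightarrow> 0 \<and>
      (\<forall>n. \<forall>t\<in>{0..T}. (\<lambda>x. max (1 - \<delta>n n) 0 *\<^sub>R v (x, t)) \<in> K \<Omega> (pn n) t)"
    by blast
  then show ?thesis
    unfolding Let_def M_def S_def m_def \<delta>n_def .
qed

end
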